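(* The following two statements are equivalent: (a) Every cyclically $4$-edge-connected cubic graph $G$ admits a proper $5$-edge-coloring $c$ with $|N_G(c)|\le 9$. (b) There exists a sublinear function $f:\mathbb{N}\to\mathbb{N}$ such that every cyclically $4$-edge-connected cubic graph $G$ admits a proper $5$-edge-coloring $c$ with $|N_G(c)|\le f(|V(G)|)$.
   Context: Graphs are finite, undirected, loopless, and may contain parallel edges. A cubic graph is cyclically $4$-edge-connected if it has no edge cut of size less than $4$ whose removal leaves at least two components each containing a cycle. A proper $k$-edge-coloring of $G$ is a map $c:E(G)\to\{1,\dots,k\}$ with adjacent edges receiving different colors. For such $c$ and a vertex $v$, $S_c(v)$ is the set of colors on edges incident to $v$. An edge $uv$ of a cubic graph is poor if $|S_c(u)\cup S_c(v)|=3$, rich if $|S_c(u)\cup S_c(v)|=5$, and abnormal if it is neither poor nor rich. $N_G(c)$ denotes the set of abnormal edges of $G$ with respect to $c$. A function $f:\mathbb{N}\to\mathbb{N}$ is sublinear if $\lim_{n\to\infty} f(n)/n=0$. *)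

theory Defs
  imports Complex_Main
begin

text \<open>A finite loopless multigraph: vertex set V, edge set E (edge identifiers, so
parallel edges are allowed), and an endpoint map giving each edge a 2-element set
of endpoints. Vertices and edges are natural numbers (every finite multigraph is
isomorphic to one of this form).\<close>

type_synonym mgraph = "nat set \<times> nat set \<times> (nat \<Rightarrow> nat set)"

definition verts :: "mgraph \<Rightarrow> nat set" where "verts G = fst G"
definition edges :: "mgraph \<Rightarrow> nat set" where "edges G = fst (snd G)"
definition ends :: "mgraph \<Rightarrow> nat \<Rightarrow> nat set" where "ends G = snd (snd G)"

definition multigraph :: "mgraph \<Rightarrow> bool" where
  "multigraph G \<longleftrightarrow> finite (verts G) \<and> finite (edges G) \<and>
     (\<forall>e\<in>edges G. ends G e \<subseteq> verts G \<and> card (ends G e) = 2)"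

definition incident :: "mgraph \<Rightarrow> nat \<Rightarrow> nat set" where
  "incident G v = {e \<in> edges G. v \<in> ends G e}"

definition cubic :: "mgraph \<Rightarrow> bool" where
  "cubic G \<longleftrightarrow> multigraph G \<and> (\<forall>v\<in>verts G. card (incident G v) = 3)"

definition adj_in :: "mgraph \<Rightarrow> nat set \<Rightarrow> (nat \<times> nat) set" where
  "adj_in G E' = {(u, w). \<exists>e\<in>E'. ends G e = {u, w}}"

definition reach_in :: "mgraph \<Rightarrow> nat set \<Rightarrow> (nat \<times> nat) set" where
  "reach_in G E' = (adj_in G E')\<^sup>* \<inter> (verts G \<times> verts G)"

definition components_in :: "mgraph \<Rightarrow> nat set \<Rightarrow> nat set set" where
  "components_in G E' = verts G // reach_in G E'"

text \<open>A cycle using only edges in E' and only vertices in C: distinct vertices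
\<open>vs!0, ..., vs!(k-1)\<close> and distinct edges \<open>es!i\<close> joining \<open>vs!i\<close> and \<open>vs!((i+1) mod k)\<close>,
with \<open>k \<ge> 2\<close> (a 2-cycle is a pair of parallel edges).\<close>
definition has_cycle_in :: "mgraph \<Rightarrow> nat set \<Rightarrow> nat set \<Rightarrow> bool" where
  "has_cycle_in G E' C \<longleftrightarrow> (\<exists>vs es. length vs = length es \<and> length vs \<ge> 2 \<and>
      distinct vs \<and> distinct es \<and> set vs \<subseteq> C \<and> set es \<subseteq> E' \<and>
      (\<forall>i < length vs. ends G (es ! i) = {vs ! i, vs ! ((i + 1) mod length vs)}))"

definition cyclic_cut :: "mgraph \<Rightarrow> nat set \<Rightarrow> bool" where
  "cyclic_cut G F \<longleftrightarrow> F \<subseteq> edges G \<and>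
     (\<exists>C1 \<in> components_in G (edges G - F). \<exists>C2 \<in> components_in G (edges G - F).
        C1 \<noteq> C2 \<and> has_cycle_in G (edges G - F) C1 \<and> has_cycle_in G (edges G - F) C2)"

definition cyc4_edge_connected :: "mgraph \<Rightarrow> bool" where
  "cyc4_edge_connected G \<longleftrightarrow> \<not> (\<exists>F. cyclic_cut G F \<and> card F < 4)"

definition proper_edge_coloring :: "mgraph \<Rightarrow> nat \<Rightarrow> (nat \<Rightarrow> nat) \<Rightarrow> bool" where
  "proper_edge_coloring G k c \<longleftrightarrow> (\<forall>e\<in>edges G. c e \<in> {1..k}) \<and>
     (\<forall>e\<in>edges G. \<forall>e'\<in>edges G. e \<noteq> e' \<and> ends G e \<inter> ends G e' \<noteq> {} \<longrightarrow> c e \<noteq> c e')"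

definition colors_at :: "mgraph \<Rightarrow> (nat \<Rightarrow> nat) \<Rightarrow> nat \<Rightarrow> nat set" where
  "colors_at G c v = c ` incident G v"

definition poor_edge :: "mgraph \<Rightarrow> (nat \<Rightarrow> nat) \<Rightarrow> nat \<Rightarrow> bool" where
  "poor_edge G c e \<longleftrightarrow> (\<exists>u w. ends G e = {u, w} \<and> card (colors_at G c u \<union> colors_at G c w) = 3)"

definition rich_edge :: "mgraph \<Rightarrow> (nat \<Rightarrow> nat) \<Rightarrow> nat \<Rightarrow> bool" where
  "rich_edge G c e \<longleftrightarrow> (\<exists>u w. ends G e = {u, w} \<and> card (colors_at G c u \<union> colors_at G c w) = 5)"

definition abnormal_edges :: "mgraph \<Rightarrow> (nat \<Rightarrow> nat) \<Rightarrow> nat set" where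
  "abnormal_edges G c = {e \<in> edges G. \<not> poor_edge G c e \<and> \<not> rich_edge G c e}"

definition sublinear :: "(nat \<Rightarrow> nat) \<Rightarrow> bool" where
  "sublinear f \<longleftrightarrow> (\<lambda>n. real (f n) / real n) \<longlonglongrightarrow> 0"

end

theory Submission
  imports Defs "HOL-Library.Nat_Bijection"
begin

(* Suppose some cyclically 4-edge-connected cubic graph G on n vertices has only 5-edge-colourings
   with at least ten abnormal edges. Pick a path x1 y1 x2 y2 in G and glue k copies of G into a
   necklace, the edges x1 y1 and x2 y2 of each copy being rerouted to the next copy. Cyclic
   4-edge-connectivity of a cubic graph means that every cut of at most three edges cuts off at
   most one vertex, and this survives the gluing, so the necklace is again a cyclically
   4-edge-connected cubic graph, now on kn vertices. A colouring of the necklace, restricted to one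
   copy and repaired on the two rerouted edges, is a colouring of G that differs from it only on
   the at most nine edges at x1, y1, x2, y2; hence every copy carries an abnormal edge, and the
   necklace needs at least k abnormal edges. No sublinear bound allows this. *)

definition inner_edges :: "mgraph \<Rightarrow> nat set \<Rightarrow> nat set" where
  "inner_edges G S = {e \<in> edges G. ends G e \<subseteq> S}"

definition cut_edges :: "mgraph \<Rightarrow> nat set \<Rightarrow> nat set" where
  "cut_edges G S = {e \<in> edges G. ends G e \<inter> S \<noteq> {} \<and> \<not> ends G e \<subseteq> S}"

lemma two_distinct_elems:
  assumes "2 \<le> card A" obtains a b where "a \<in> A" "b \<in> A" "a \<noteq> b"
proof -
  have "finite A" using assms by (metis card.infinite not_numeral_le_zero)
  then show ?thesis using that assms card_le_Suc0_iff_eq[of A] by auto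
qed

lemma card_le_diff_plus_int: "card A \<le> card (A - B) + card (A \<inter> B)"
proof -
  have "A = (A - B) \<union> (A \<inter> B)" by auto
  then show ?thesis by (metis card_Un_le)
qed

lemma card_disjoint_subsets_le:
  assumes "finite C" "A \<subseteq> C" "B \<subseteq> C" "A \<inter> B = {}"
  shows "card A + card B \<le> card C"
proof -
  have "card A + card B = card (A \<union> B)"
    using assms finite_subset by (intro card_Un_disjoint[symmetric]) auto
  also have "\<dots> \<le> card C" using assms by (intro card_mono) auto
  finally show ?thesis .
qed

lemma card_le_1_singletonE:
  assumes "finite A" "A \<noteq> {}" "card A \<le> 1" obtains v where "A = {v}"
  using assms by (metis One_nat_def card_1_singletonE card_gt_0_iff le_antisym less_eq_Suc_le)

lemma edge_endsE:
  assumes "multigraph G" "e \<in> edges G"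
  obtains a b where "ends G e = {a,b}" "a \<noteq> b" "a \<in> verts G" "b \<in> verts G"
  using assms unfolding multigraph_def by (metis card_2_iff insert_subset)

lemma incident_other_endE:
  assumes G: "multigraph G" and e: "e \<in> incident G v"
  obtains w where "w \<noteq> v" "ends G e = {v,w}"
proof -
  have "e \<in> edges G" "v \<in> ends G e" using e unfolding incident_def by auto
  then show ?thesis using that edge_endsE[OF G] by (metis doubleton_eq_iff insertE singletonD)
qed

lemma finite_incident: "multigraph G \<Longrightarrow> finite (incident G v)"
  unfolding multigraph_def incident_def by auto

lemma cut_edges_compl:
  assumes "multigraph G" "S \<subseteq> verts G" shows "cut_edges G (verts G - S) = cut_edges G S"
  using assms unfolding cut_edges_def multigraph_def by blast

lemma cut_edges_singleton:
  assumes "multigraph G" shows "cut_edges G {v} = incident G v"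
  using assms unfolding cut_edges_def incident_def
  by (auto elim: edge_endsE[OF assms])

lemma degree_sum_inner_cut:
  assumes G: "multigraph G" and S: "S \<subseteq> verts G"
  shows "(\<Sum>v\<in>S. card (incident G v)) = 2 * card (inner_edges G S) + card (cut_edges G S)"
proof -
  have fE: "finite (edges G)" and fS: "finite S"
    using G S finite_subset unfolding multigraph_def by auto
  have "(\<Sum>v\<in>S. card (incident G v)) = (\<Sum>v\<in>S. \<Sum>e\<in>edges G. if v \<in> ends G e then 1 else 0)"
    unfolding incident_def using fE by (simp add: sum.If_cases Int_def)
  also have "\<dots> = (\<Sum>e\<in>edges G. card (S \<inter> ends G e))"
    using fS by (subst sum.swap) (simp add: sum.If_cases Int_def)
  also have "\<dots> = (\<Sum>e\<in>edges G. (if e \<in> inner_edges G S then 2 else 0) + (if e \<in> cut_edges G S then 1 else 0))"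
  proof (rule sum.cong)
    fix e assume e: "e \<in> edges G"
    then obtain a b where "ends G e = {a,b}" "a \<noteq> b" using edge_endsE[OF G] by metis
    then show "card (S \<inter> ends G e) = (if e \<in> inner_edges G S then 2 else 0) + (if e \<in> cut_edges G S then 1 else 0)"
      using e unfolding inner_edges_def cut_edges_def
      by (cases "a \<in> S"; cases "b \<in> S") (auto simp: Int_insert_right)
  qed simp
  also have "\<dots> = 2 * card (inner_edges G S) + card (cut_edges G S)"
    using fE by (simp add: sum.distrib sum.If_cases inner_edges_def cut_edges_def Int_def)
  finally show ?thesis .
qed

lemma cubic_edge_count:
  assumes cub: "cubic G" shows "3 * card (verts G) = 2 * card (edges G)"
proof -
  have G: "multigraph G" using cub unfolding cubic_def by auto
  have "inner_edges G (verts G) = edges G" "cut_edges G (verts G) = {}"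
    using G unfolding inner_edges_def cut_edges_def multigraph_def by auto
  then show ?thesis
    using degree_sum_inner_cut[OF G subset_refl] cub unfolding cubic_def by simp
qed

lemma equiv_reach_in: "equiv (verts G) (reach_in G E')"
proof (rule equivI)
  have "sym ((adj_in G E')\<^sup>*)"
    by (rule sym_rtrancl) (auto simp: sym_def adj_in_def insert_commute)
  then show "sym (reach_in G E')" unfolding reach_in_def by (auto simp: sym_def)
  show "trans (reach_in G E')" unfolding reach_in_def by (auto simp: trans_def)
qed (auto simp: reach_in_def refl_on_def)

lemma components_in_subset: "C \<in> components_in G E' \<Longrightarrow> C \<subseteq> verts G"
  using in_quotient_imp_subset[OF equiv_reach_in] unfolding components_in_def .

lemma components_in_disjoint:
  "C1 \<in> components_in G E' \<Longrightarrow> C2 \<in> components_in G E' \<Longrightarrow> C1 \<noteq> C2 \<Longrightarrow> C1 \<inter> C2 = {}"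
  using quotient_disj[OF equiv_reach_in] unfolding components_in_def by blast

lemma components_in_closed:
  assumes G: "multigraph G" and C: "C \<in> components_in G E'" and e: "e \<in> E'" "e \<in> edges G"
    and uw: "ends G e = {u,w}" and u: "u \<in> C"
  shows "w \<in> C"
proof -
  have "u \<in> verts G" "w \<in> verts G" using G e uw unfolding multigraph_def by auto
  then have "(u, w) \<in> reach_in G E'" using e uw unfolding reach_in_def adj_in_def by auto
  then show ?thesis using in_quotient_imp_closed[OF equiv_reach_in] C u unfolding components_in_def by blast
qed

lemma has_cycle_in_card:
  assumes "has_cycle_in G E' C" "finite C" shows "2 \<le> card C"
proof -
  obtain vs where "length vs \<ge> 2" "distinct vs" "set vs \<subseteq> C"
    using assms unfolding has_cycle_in_def by blast
  then show ?thesis using assms(2) by (metis card_mono distinct_card order_trans)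
qed

lemma reach_avoiding_cut_stays:
  assumes "(a, x) \<in> (adj_in G (edges G - cut_edges G T))\<^sup>*" and "a \<in> T"
  shows "x \<in> T"
  using assms
proof (induction rule: rtrancl_induct)
  case (step y z)
  then show ?case unfolding adj_in_def cut_edges_def by auto
qed

lemma inner_cycle_component:
  assumes TV: "T \<subseteq> verts G" and cyc: "has_cycle_in G (inner_edges G T) T"
  shows "\<exists>C \<in> components_in G (edges G - cut_edges G T). C \<subseteq> T \<and> has_cycle_in G (edges G - cut_edges G T) C"
proof -
  let ?E = "edges G - cut_edges G T"
  obtain vs es where c: "length vs = length es" "length vs \<ge> 2" "distinct vs" "distinct es"
    "set vs \<subseteq> T" "set es \<subseteq> inner_edges G T"
    "\<forall>i < length vs. ends G (es ! i) = {vs ! i, vs ! ((i + 1) mod length vs)}"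
    using cyc unfolding has_cycle_in_def by blast
  have inner: "inner_edges G T \<subseteq> ?E" unfolding inner_edges_def cut_edges_def by auto
  let ?a = "vs ! 0"
  have aT: "?a \<in> T" using c(2,5) by (cases vs) auto
  define C where "C = reach_in G ?E `` {?a}"
  have C: "C \<in> components_in G ?E" unfolding C_def components_in_def using aT TV by (auto intro: quotientI)
  have "(?a, vs ! j) \<in> (adj_in G ?E)\<^sup>*" if "j < length vs" for j
    using that
  proof (induction j)
    case (Suc j)
    have "ends G (es ! j) = {vs ! j, vs ! Suc j}" using c(7) Suc.prems
      by (metis Suc_eq_plus1 Suc_lessD mod_less)
    moreover have "es ! j \<in> ?E" using c(1,6) inner Suc.prems by (metis Suc_lessD nth_mem subsetD)
    ultimately have "(vs ! j, vs ! Suc j) \<in> adj_in G ?E" unfolding adj_in_def by auto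
    then show ?case using Suc by (meson Suc_lessD rtrancl_into_rtrancl)
  qed simp
  then have "set vs \<subseteq> C" using aT TV c(5) unfolding C_def reach_in_def
    by (auto simp: in_set_conv_nth)
  then have "has_cycle_in G ?E C" unfolding has_cycle_in_def using c inner
    by (intro exI[of _ vs] exI[of _ es]) auto
  moreover have "C \<subseteq> T" unfolding C_def reach_in_def by (blast dest: reach_avoiding_cut_stays[OF _ aT])
  ultimately show ?thesis using C by blast
qed

definition is_path_in :: "mgraph \<Rightarrow> nat set \<Rightarrow> nat set \<Rightarrow> nat list \<Rightarrow> nat list \<Rightarrow> bool" where
  "is_path_in G E' S vs es \<longleftrightarrow> length vs = Suc (length es) \<and> distinct vs \<and> set vs \<subseteq> S \<and>
     set es \<subseteq> E' \<and> (\<forall>i<length es. ends G (es ! i) = {vs ! i, vs ! Suc i})"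

lemma is_path_in_distinct_edges:
  assumes "is_path_in G E' S vs es" shows "distinct es"
  unfolding distinct_conv_nth
proof (intro allI impI)
  fix i j assume ij: "i < length es" "j < length es" "i \<noteq> j"
  have "{vs ! i, vs ! Suc i} \<noteq> {vs ! j, vs ! Suc j}"
    using assms ij unfolding is_path_in_def by (auto simp: doubleton_eq_iff nth_eq_iff_index_eq)
  then show "es ! i \<noteq> es ! j" using assms ij unfolding is_path_in_def by metis
qed

lemma is_path_in_rev:
  assumes "is_path_in G E' S vs es" shows "is_path_in G E' S (rev vs) (rev es)"
  unfolding is_path_in_def
proof (intro conjI allI impI)
  fix i assume i: "i < length (rev es)"
  have "ends G (es ! (length es - Suc i)) = {vs ! (length es - Suc i), vs ! Suc (length es - Suc i)}"
    using assms i unfolding is_path_in_def by auto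
  moreover have "Suc (length es - Suc i) = length es - i" using i by simp
  ultimately show "ends G (rev es ! i) = {rev vs ! i, rev vs ! Suc i}"
    using assms i unfolding is_path_in_def by (auto simp: rev_nth)
qed (use assms in \<open>auto simp: is_path_in_def\<close>)

lemma is_path_in_length_le_card:
  assumes "is_path_in G E' S vs es" "finite S" shows "length vs \<le> card S"
  using assms unfolding is_path_in_def by (metis card_mono distinct_card)

lemma is_path_in_close_cycle:
  assumes p: "is_path_in G E' S vs es" and t: "1 \<le> t" "t < length vs" and f: "f \<in> E'"
    and fe: "ends G f = {vs ! t, vs ! 0}" and fn: "f \<notin> set (take t es)"
  shows "has_cycle_in G E' S"
proof -
  have le: "t \<le> length es" using p t unfolding is_path_in_def by auto
  define vs' where "vs' = take (Suc t) vs"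
  define es' where "es' = take t es @ [f]"
  have lv: "length vs' = Suc t" and le': "length es' = Suc t"
    using t le unfolding vs'_def es'_def by auto
  have "ends G (es' ! i) = {vs' ! i, vs' ! ((i + 1) mod length vs')}" if i: "i < length vs'" for i
  proof (cases "i < t")
    case True
    then have "es' ! i = es ! i" "(i + 1) mod length vs' = Suc i"
      unfolding es'_def using le lv by (auto simp: nth_append)
    then show ?thesis using p True le unfolding is_path_in_def vs'_def by auto
  next
    case False
    then have "i = t" using i lv by simp
    then show ?thesis using fe le lv unfolding es'_def vs'_def by (simp add: nth_append)
  qed
  moreover have "distinct vs'" "set vs' \<subseteq> S" "set es' \<subseteq> E'"
    using p f unfolding is_path_in_def vs'_def es'_def
    by (auto dest: in_set_takeD simp: subset_iff)
  moreover have "distinct es'" using is_path_in_distinct_edges[OF p] fn unfolding es'_def by auto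
  ultimately show ?thesis unfolding has_cycle_in_def using lv le' t
    by (intro exI[of _ vs'] exI[of _ es']) auto
qed

lemma longest_inner_path_exists:
  assumes fS: "finite S" and e: "e \<in> inner_edges G S" and ab: "ends G e = {a,b}" "a \<noteq> b"
  obtains vs es where "is_path_in G (inner_edges G S) S vs es" "2 \<le> length vs"
    "\<And>vs' es'. is_path_in G (inner_edges G S) S vs' es' \<Longrightarrow> length vs' \<le> length vs"
proof -
  define P where "P n \<longleftrightarrow> (\<exists>vs es. is_path_in G (inner_edges G S) S vs es \<and> length vs = n)" for n
  have "is_path_in G (inner_edges G S) S [a,b] [e]"
    unfolding is_path_in_def using ab e unfolding inner_edges_def by simp
  then have P2: "P 2" unfolding P_def by fastforce
  moreover have "\<forall>n. P n \<longrightarrow> n \<le> card S"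
    unfolding P_def using is_path_in_length_le_card[OF _ fS] by blast
  ultimately obtain m where m: "P m" "\<forall>n. P n \<longrightarrow> n \<le> m"
    using Nat.ex_has_greatest_nat[of P 2 "card S"] by blast
  then obtain vs es where "is_path_in G (inner_edges G S) S vs es" "length vs = m" unfolding P_def by blast
  moreover have "2 \<le> m" using m(2) P2 by simp
  ultimately show ?thesis using that m(2) unfolding P_def by blast
qed

text \<open>Maximality forbids extending a longest path at its start, and the absence of cycles forbids
  chords back into it; so every inner edge at \<open>vs ! 0\<close> is parallel to the first path edge.\<close>

lemma longest_path_start_edge:
  assumes G: "multigraph G"
    and p: "is_path_in G (inner_edges G S) S vs es" and l2: "2 \<le> length vs"
    and mx: "\<And>vs' es'. is_path_in G (inner_edges G S) S vs' es' \<Longrightarrow> length vs' \<le> length vs"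
    and nc: "\<not> has_cycle_in G (inner_edges G S) S"
    and f: "f \<in> incident G (vs ! 0) \<inter> inner_edges G S"
  shows "ends G f = {vs ! 0, vs ! 1}"
proof -
  obtain w where w: "ends G f = {vs ! 0, w}" "w \<noteq> vs ! 0"
    using incident_other_endE[OF G] f by (metis IntD1)
  have wS: "w \<in> S" using w f unfolding inner_edges_def by auto
  have dv: "distinct vs" and les: "length vs = Suc (length es)"
    using p unfolding is_path_in_def by auto
  show ?thesis
  proof (cases "w \<in> set vs")
    case False
    have "is_path_in G (inner_edges G S) S (w # vs) (f # es)"
      using p False wS f w unfolding is_path_in_def by (auto simp: nth_Cons' insert_commute)
    then have "length (w # vs) \<le> length vs" by (rule mx)
    then show ?thesis by simp
  next
    case True
    then obtain t where t: "t < length vs" "vs ! t = w" by (metis in_set_conv_nth)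
    have t0: "t \<noteq> 0" using t(2) w(2) by (cases t) auto
    show ?thesis
    proof (rule ccontr)
      assume ne: "ends G f \<noteq> {vs ! 0, vs ! 1}"
      have "f \<notin> set (take t es)"
      proof
        assume "f \<in> set (take t es)"
        then obtain i where i: "i < t" "i < length es" "es ! i = f" by (auto simp: in_set_conv_nth)
        then have "{vs ! i, vs ! Suc i} = {vs ! 0, vs ! t}" using p w t unfolding is_path_in_def by auto
        then show False using i t t0 ne w dv les by (auto simp: doubleton_eq_iff nth_eq_iff_index_eq)
      qed
      then have "has_cycle_in G (inner_edges G S) S"
        using is_path_in_close_cycle[OF p, of t f] t t0 f w by (auto simp: insert_commute)
      then show False using nc by simp
    qed
  qed
qed

lemma longest_path_start_inner_degree:
  assumes G: "multigraph G"
    and p: "is_path_in G (inner_edges G S) S vs es" and l2: "2 \<le> length vs"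
    and mx: "\<And>vs' es'. is_path_in G (inner_edges G S) S vs' es' \<Longrightarrow> length vs' \<le> length vs"
    and nc: "\<not> has_cycle_in G (inner_edges G S) S"
  shows "card (incident G (vs ! 0) \<inter> inner_edges G S) \<le> 1"
proof (rule ccontr)
  assume "\<not> ?thesis"
  then have "2 \<le> card (incident G (vs ! 0) \<inter> inner_edges G S)" by simp
  then obtain f1 f2 where f12: "f1 \<in> incident G (vs ! 0) \<inter> inner_edges G S"
    "f2 \<in> incident G (vs ! 0) \<inter> inner_edges G S" "f1 \<noteq> f2"
    by (rule two_distinct_elems)
  obtain f where f: "f \<in> {f1,f2}" "f \<noteq> es ! 0" using f12(3) by auto
  have "ends G f = {vs ! 1, vs ! 0}"
    using longest_path_start_edge[OF G p l2 mx nc] f f12 by (auto simp: insert_commute)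
  moreover have "f \<notin> set (take 1 es)" using f p l2 unfolding is_path_in_def by (cases es) auto
  ultimately have "has_cycle_in G (inner_edges G S) S"
    using is_path_in_close_cycle[OF p, of 1 f] l2 f f12 by auto
  then show False using nc by simp
qed

lemma cut_degree_ge2:
  assumes "v \<in> S" "card (incident G v) = 3" "card (incident G v \<inter> inner_edges G S) \<le> 1"
  shows "2 \<le> card (incident G v \<inter> cut_edges G S)"
proof -
  have "incident G v = (incident G v \<inter> inner_edges G S) \<union> (incident G v \<inter> cut_edges G S)"
    using assms(1) unfolding incident_def inner_edges_def cut_edges_def by auto
  then have "card (incident G v) \<le> card (incident G v \<inter> inner_edges G S) + card (incident G v \<inter> cut_edges G S)"
    by (metis card_Un_le)
  then show ?thesis using assms by simp
qed

lemma cut_edges_ge4: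
  assumes G: "multigraph G" and uw: "u \<in> S" "w \<in> S" "u \<noteq> w"
    and "2 \<le> card (incident G u \<inter> cut_edges G S)" "2 \<le> card (incident G w \<inter> cut_edges G S)"
  shows "4 \<le> card (cut_edges G S)"
proof -
  have fC: "finite (cut_edges G S)" using G unfolding multigraph_def cut_edges_def by auto
  have "(incident G u \<inter> cut_edges G S) \<inter> (incident G w \<inter> cut_edges G S) = {}"
  proof (rule ccontr)
    assume "\<not> ?thesis"
    then obtain e where e: "e \<in> edges G" "u \<in> ends G e" "w \<in> ends G e" "e \<in> cut_edges G S"
      unfolding incident_def by auto
    then have "ends G e = {u,w}" using uw by (auto elim: edge_endsE[OF G])
    then show False using e(4) uw unfolding cut_edges_def by auto
  qed
  then have "card (incident G u \<inter> cut_edges G S) + card (incident G w \<inter> cut_edges G S)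
      \<le> card (cut_edges G S)"
    by (rule card_disjoint_subsets_le[OF fC Int_lower2 Int_lower2])
  then show ?thesis using assms by simp
qed

text \<open>Without an inner cycle, the two ends of a longest inner path (or any two vertices, if there
  are no inner edges) have at most one inner edge each, so each sends two edges into the cut.\<close>

lemma small_cut_side_has_cycle:
  assumes G: "multigraph G" and SV: "S \<subseteq> verts G"
    and deg: "\<And>v. v \<in> S \<Longrightarrow> card (incident G v) = 3"
    and S2: "2 \<le> card S" and cut3: "card (cut_edges G S) \<le> 3"
  shows "has_cycle_in G (inner_edges G S) S"
proof (rule ccontr)
  assume nc: "\<not> ?thesis"
  have fS: "finite S" using S2 by (metis card.infinite not_numeral_le_zero)
  have end_cut: "2 \<le> card (incident G v \<inter> cut_edges G S)"
    if "v \<in> S" "card (incident G v \<inter> inner_edges G S) \<le> 1" for v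
    using cut_degree_ge2 deg that by blast
  show False
  proof (cases "inner_edges G S = {}")
    case True
    obtain u w where uw: "u \<in> S" "w \<in> S" "u \<noteq> w" using two_distinct_elems[OF S2] by blast
    have "4 \<le> card (cut_edges G S)"
      using cut_edges_ge4[OF G uw end_cut[OF uw(1)] end_cut[OF uw(2)]] True by simp
    then show False using cut3 by simp
  next
    case False
    then obtain e where e: "e \<in> inner_edges G S" by auto
    then obtain a b where "ends G e = {a,b}" "a \<noteq> b" unfolding inner_edges_def by (auto elim: edge_endsE[OF G])
    then obtain vs es where p: "is_path_in G (inner_edges G S) S vs es" "2 \<le> length vs"
      "\<And>vs' es'. is_path_in G (inner_edges G S) S vs' es' \<Longrightarrow> length vs' \<le> length vs"
      using longest_inner_path_exists[OF fS e] by metis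
    have pr: "is_path_in G (inner_edges G S) S (rev vs) (rev es)" using is_path_in_rev[OF p(1)] .
    have d1: "card (incident G (vs ! 0) \<inter> inner_edges G S) \<le> 1"
      using longest_path_start_inner_degree[OF G p nc] .
    have d2: "card (incident G (rev vs ! 0) \<inter> inner_edges G S) \<le> 1"
      using longest_path_start_inner_degree[OF G pr _ _ nc] p by simp
    have dv: "distinct vs" "set vs \<subseteq> S" using p(1) unfolding is_path_in_def by auto
    have r0: "rev vs ! 0 = vs ! (length vs - 1)" using p(2) rev_nth[of 0 vs] by (cases vs) auto
    have inS: "vs ! 0 \<in> S" "rev vs ! 0 \<in> S" using dv(2) p(2) r0 by (auto intro: nth_mem[THEN subsetD[OF dv(2)]])
    have "vs ! 0 \<noteq> rev vs ! 0" unfolding r0 using dv(1) p(2) nth_eq_iff_index_eq[OF dv(1), of 0 "length vs - 1"] by (cases vs) auto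
    then have "4 \<le> card (cut_edges G S)"
      using cut_edges_ge4[OF G inS _ end_cut[OF inS(1) d1] end_cut[OF inS(2) d2]] by blast
    then show False using cut3 by simp
  qed
qed

section \<open>Cuts of size at most three\<close>

definition trivial_small_cuts :: "mgraph \<Rightarrow> bool" where
  "trivial_small_cuts G \<longleftrightarrow>
     (\<forall>S \<subseteq> verts G. card (cut_edges G S) \<le> 3 \<longrightarrow> card S \<le> 1 \<or> card (verts G - S) \<le> 1)"

lemma component_cut_subset:
  assumes G: "multigraph G" and C: "C \<in> components_in G (edges G - F)"
  shows "cut_edges G C \<subseteq> F"
proof
  fix e assume e: "e \<in> cut_edges G C"
  then have eE: "e \<in> edges G" unfolding cut_edges_def by auto
  then obtain a b where ab: "ends G e = {a,b}" "e \<in> edges G" using edge_endsE[OF G] by metis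
  show "e \<in> F"
  proof (rule ccontr)
    assume "e \<notin> F"
    then have "a \<in> C \<longleftrightarrow> b \<in> C"
      using components_in_closed[OF G C] ab by (metis DiffI insert_commute)
    then show False using e ab unfolding cut_edges_def by auto
  qed
qed

lemma trivial_small_cuts_imp_cyc4:
  assumes G: "multigraph G" and ct: "trivial_small_cuts G" shows "cyc4_edge_connected G"
  unfolding cyc4_edge_connected_def
proof
  assume "\<exists>F. cyclic_cut G F \<and> card F < 4"
  then obtain F C1 C2 where F: "F \<subseteq> edges G" "card F < 4" and
    C: "C1 \<in> components_in G (edges G - F)" "C2 \<in> components_in G (edges G - F)" "C1 \<noteq> C2"
    "has_cycle_in G (edges G - F) C1" "has_cycle_in G (edges G - F) C2"
    unfolding cyclic_cut_def by blast
  have fV: "finite (verts G)" and fE: "finite (edges G)" using G unfolding multigraph_def by auto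
  have C1V: "C1 \<subseteq> verts G" using components_in_subset[OF C(1)] .
  have "card (cut_edges G C1) \<le> 3"
    using card_mono[OF finite_subset[OF F(1) fE] component_cut_subset[OF G C(1)]] F(2) by simp
  then have "card C1 \<le> 1 \<or> card (verts G - C1) \<le> 1" using ct C1V unfolding trivial_small_cuts_def by blast
  moreover have "2 \<le> card C1" using has_cycle_in_card[OF C(4)] finite_subset[OF C1V fV] by blast
  moreover have "C2 \<subseteq> verts G - C1"
    using components_in_subset[OF C(2)] components_in_disjoint[OF C(1,2,3)] by auto
  then have "2 \<le> card (verts G - C1)"
    using has_cycle_in_card[OF C(5)] fV by (meson card_mono finite_Diff order_trans finite_subset)
  ultimately show False by simp
qed

text \<open>A cut of size at most 3 with two vertices on each side has a cycle on each side
  (\<open>small_cut_side_has_cycle\<close>), hence is a cyclic cut.\<close>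

lemma cyc4_imp_trivial_small_cuts:
  assumes cub: "cubic G" and cy: "cyc4_edge_connected G" shows "trivial_small_cuts G"
  unfolding trivial_small_cuts_def
proof (intro allI impI)
  fix S assume SV: "S \<subseteq> verts G" and c3: "card (cut_edges G S) \<le> 3"
  have G: "multigraph G" and deg: "\<And>v. v \<in> verts G \<Longrightarrow> card (incident G v) = 3"
    using cub unfolding cubic_def by auto
  have compl: "cut_edges G (verts G - S) = cut_edges G S" using cut_edges_compl[OF G SV] .
  show "card S \<le> 1 \<or> card (verts G - S) \<le> 1"
  proof (rule ccontr)
    assume "\<not> ?thesis"
    then have "2 \<le> card S" "2 \<le> card (verts G - S)" by auto
    then have "has_cycle_in G (inner_edges G S) S"
      and "has_cycle_in G (inner_edges G (verts G - S)) (verts G - S)"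
      using small_cut_side_has_cycle[OF G] SV deg c3 compl by (metis Diff_subset subsetD)+
    then obtain C1 C2 where
      C1: "C1 \<in> components_in G (edges G - cut_edges G S)" "C1 \<subseteq> S"
        "has_cycle_in G (edges G - cut_edges G S) C1" and
      C2: "C2 \<in> components_in G (edges G - cut_edges G S)" "C2 \<subseteq> verts G - S"
        "has_cycle_in G (edges G - cut_edges G S) C2"
      using inner_cycle_component[OF SV] inner_cycle_component[of "verts G - S" G] compl by auto
    have "finite C1" using components_in_subset[OF C1(1)] G finite_subset unfolding multigraph_def by auto
    then have "C1 \<noteq> {}" using has_cycle_in_card[OF C1(3)] by auto
    then have "C1 \<noteq> C2" using C1(2) C2(2) by blast
    moreover have "cut_edges G S \<subseteq> edges G" unfolding cut_edges_def by blast
    ultimately have "cyclic_cut G (cut_edges G S)"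
      unfolding cyclic_cut_def using C1(1,3) C2(1,3) by blast
    then show False using cy c3 unfolding cyc4_edge_connected_def by auto
  qed
qed

lemma small_cut_vertex_star:
  assumes G: "multigraph G" and ct: "trivial_small_cuts G"
    and R: "R \<subseteq> verts G" "R \<noteq> {}" "R \<noteq> verts G" and c3: "card (cut_edges G R) \<le> 3"
  obtains v where "v \<in> verts G" "cut_edges G R = incident G v"
proof -
  have fV: "finite (verts G)" using G unfolding multigraph_def by auto
  have "card R \<le> 1 \<or> card (verts G - R) \<le> 1" using ct R(1) c3 unfolding trivial_small_cuts_def by auto
  then show ?thesis
  proof
    assume "card R \<le> 1"
    moreover have "finite R" using R(1) fV finite_subset by blast
    ultimately obtain v where "R = {v}" using R(2) card_le_1_singletonE by blast
    then show ?thesis using that[of v] R(1) cut_edges_singleton[OF G, of v] by simp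
  next
    assume "card (verts G - R) \<le> 1"
    moreover have "verts G - R \<noteq> {}" using R(1,3) by blast
    ultimately obtain v where v: "verts G - R = {v}" using fV card_le_1_singletonE by blast
    then have "cut_edges G R = incident G v" using cut_edges_compl[OF G R(1)] cut_edges_singleton[OF G, of v] by simp
    then show ?thesis using that[of v] v by blast
  qed
qed

lemma no_parallel_edges:
  assumes cub: "cubic G" and ct: "trivial_small_cuts G" and V: "5 \<le> card (verts G)"
    and a: "a \<in> edges G" and b: "b \<in> edges G" and eq: "ends G a = ends G b"
  shows "a = b"
proof (rule ccontr)
  assume ab: "a \<noteq> b"
  have G: "multigraph G" using cub unfolding cubic_def by auto
  obtain u w where uw: "ends G a = {u,w}" "u \<noteq> w" "u \<in> verts G" "w \<in> verts G"
    using edge_endsE[OF G a] by metis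
  have SV: "{u,w} \<subseteq> verts G" using uw by auto
  have "{a,b} \<subseteq> inner_edges G {u,w}" using a b eq uw unfolding inner_edges_def by auto
  then have "2 \<le> card (inner_edges G {u,w})"
    using ab G unfolding inner_edges_def multigraph_def
    by (metis (no_types, lifting) card_2_iff card_mono finite_subset mem_Collect_eq subsetI)
  moreover have "(\<Sum>v\<in>{u,w}. card (incident G v)) = 6" using cub uw unfolding cubic_def by simp
  ultimately have "card (cut_edges G {u,w}) \<le> 3" using degree_sum_inner_cut[OF G SV] by simp
  then have "card {u,w} \<le> 1 \<or> card (verts G - {u,w}) \<le> 1"
    using ct SV unfolding trivial_small_cuts_def by blast
  then have "card (verts G - {u,w}) \<le> 1" using uw(2) by simp
  moreover have "card (verts G - {u,w}) = card (verts G) - 2"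
    using SV uw(2) by (simp add: card_Diff_subset)
  ultimately show False using V by simp
qed

text \<open>Without parallel edges, a third neighbour of \<open>x2\<close> other than \<open>y1\<close> and \<open>x1\<close> exists,
  which gives a path \<open>x1 y1 x2 y2\<close> on four distinct vertices.\<close>

lemma obtain_three_edge_path:
  assumes cub: "cubic G" and ct: "trivial_small_cuts G" and V: "5 \<le> card (verts G)"
  obtains x1 y1 x2 y2 e1 e2 g where "e1 \<in> edges G" "ends G e1 = {x1,y1}"
    "e2 \<in> edges G" "ends G e2 = {x2,y2}" "g \<in> edges G" "ends G g = {y1,x2}"
    "x1 \<noteq> y1" "x1 \<noteq> x2" "x1 \<noteq> y2" "y1 \<noteq> x2" "y1 \<noteq> y2" "x2 \<noteq> y2"
proof -
  have G: "multigraph G" and deg: "\<And>v. v \<in> verts G \<Longrightarrow> card (incident G v) = 3"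
    using cub unfolding cubic_def by auto
  note np = no_parallel_edges[OF cub ct V]
  have incE: "e \<in> edges G" if "e \<in> incident G v" for e v using that unfolding incident_def by auto
  have two_more: "2 \<le> card (incident G v - {e})" if "v \<in> verts G" "e \<in> incident G v" for v e
    using deg[OF that(1)] card_Diff_singleton[OF that(2)] by simp
  obtain v0 where v0: "v0 \<in> verts G" using V by (metis all_not_in_conv card.empty not_numeral_le_zero)
  then obtain g where "g \<in> incident G v0" using deg[OF v0] by fastforce
  then obtain y1 x2 where g: "g \<in> edges G" "ends G g = {y1,x2}" "y1 \<noteq> x2" "y1 \<in> verts G" "x2 \<in> verts G"
    using edge_endsE[OF G] incE by metis
  have gi: "g \<in> incident G y1" "g \<in> incident G x2" using g unfolding incident_def by auto
  obtain e1 where e1: "e1 \<in> incident G y1" "e1 \<noteq> g"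
    using two_distinct_elems[OF two_more[OF g(4) gi(1)]] by (metis Diff_iff singletonD)
  obtain x1 where x1: "x1 \<noteq> y1" "ends G e1 = {y1,x1}" using incident_other_endE[OF G e1(1)] by metis
  have x1x2: "x1 \<noteq> x2" using np[OF incE[OF e1(1)] g(1)] e1 x1 g by auto
  obtain a b where ab: "a \<in> incident G x2 - {g}" "b \<in> incident G x2 - {g}" "a \<noteq> b"
    using two_distinct_elems[OF two_more[OF g(5) gi(2)]] .
  obtain wa where wa: "wa \<noteq> x2" "ends G a = {x2,wa}" using incident_other_endE[OF G] ab(1) by blast
  obtain wb where wb: "wb \<noteq> x2" "ends G b = {x2,wb}" using incident_other_endE[OF G] ab(2) by blast
  have "wa \<noteq> wb" using np ab wa wb incE by blast
  then obtain e2 y2 where e2: "e2 \<in> incident G x2 - {g}" "ends G e2 = {x2,y2}" "y2 \<noteq> x2" "y2 \<noteq> x1"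
    using ab wa wb by metis
  have y2y1: "y2 \<noteq> y1" using np[OF incE g(1)] e2 g by (auto simp: insert_commute)
  show ?thesis
    by (rule that[of e1 x1 y1 e2 x2 y2 g]) (use incE e1 x1 e2 g x1x2 y2y1 in \<open>auto simp: insert_commute\<close>)
qed

lemma poor_edge_iff:
  "ends X e = {u,w} \<Longrightarrow> poor_edge X c e \<longleftrightarrow> card (colors_at X c u \<union> colors_at X c w) = 3"
  unfolding poor_edge_def by (auto simp: doubleton_eq_iff Un_commute)

lemma rich_edge_iff:
  "ends X e = {u,w} \<Longrightarrow> rich_edge X c e \<longleftrightarrow> card (colors_at X c u \<union> colors_at X c w) = 5"
  unfolding rich_edge_def by (auto simp: doubleton_eq_iff Un_commute)

lemma exists_free_color:
  assumes "finite X" "card X \<le> 4" shows "\<exists>d \<in> {1..5::nat}. d \<notin> c ` X"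
proof (rule ccontr)
  assume "\<not> ?thesis"
  then have "card {1..5::nat} \<le> card (c ` X)" using assms by (intro card_mono) auto
  also have "\<dots> \<le> card X" using assms(1) by (rule card_image_le)
  finally show False using assms by simp
qed

lemma card_adjacent_edges_le4:
  assumes cub: "cubic G" and e: "e \<in> edges G" "ends G e = {a,b}"
  shows "card ((incident G a \<union> incident G b) - {e}) \<le> 4"
proof -
  have G: "multigraph G" and ab: "a \<in> verts G" "b \<in> verts G"
    using cub e unfolding cubic_def multigraph_def by auto
  have "e \<in> incident G a \<inter> incident G b" using e unfolding incident_def by auto
  then have "1 \<le> card (incident G a \<inter> incident G b)" "e \<in> incident G a \<union> incident G b"
    using finite_incident[OF G] by (auto simp: Suc_le_eq card_gt_0_iff)
  moreover have "card (incident G a \<union> incident G b) + card (incident G a \<inter> incident G b) = 6"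
    using card_Un_Int[OF finite_incident[OF G] finite_incident[OF G], of a b] cub ab
    unfolding cubic_def by simp
  ultimately show ?thesis by (simp add: card_Diff_singleton)
qed

lemma proper_recolor_two_edges:
  assumes cub: "cubic G" and e1: "e1 \<in> edges G" "ends G e1 = {x1,y1}"
    and e2: "e2 \<in> edges G" "ends G e2 = {x2,y2}" and disj: "ends G e1 \<inter> ends G e2 = {}"
    and range: "\<And>f. f \<in> edges G - {e1,e2} \<Longrightarrow> c f \<in> {1..5}"
    and proper: "\<And>f f'. f \<in> edges G - {e1,e2} \<Longrightarrow> f' \<in> edges G - {e1,e2} \<Longrightarrow> f \<noteq> f' \<Longrightarrow>
       ends G f \<inter> ends G f' \<noteq> {} \<Longrightarrow> c f \<noteq> c f'"
  obtains c' where "proper_edge_coloring G 5 c'" "\<And>f. f \<noteq> e1 \<Longrightarrow> f \<noteq> e2 \<Longrightarrow> c' f = c f"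
proof -
  have G: "multigraph G" using cub unfolding cubic_def by auto
  define N1 where "N1 = (incident G x1 \<union> incident G y1) - {e1}"
  define N2 where "N2 = (incident G x2 \<union> incident G y2) - {e2}"
  have N: "f \<in> N1" if "f \<in> edges G" "f \<noteq> e1" "ends G f \<inter> ends G e1 \<noteq> {}" for f
    using that e1 unfolding N1_def incident_def by auto
  have N': "f \<in> N2" if "f \<in> edges G" "f \<noteq> e2" "ends G f \<inter> ends G e2 \<noteq> {}" for f
    using that e2 unfolding N2_def incident_def by auto
  have "finite N1" "finite N2" unfolding N1_def N2_def using finite_incident[OF G] by auto
  then obtain d1 d2 where d1: "d1 \<in> {1..5}" "d1 \<notin> c ` N1" and d2: "d2 \<in> {1..5}" "d2 \<notin> c ` N2"
    using exists_free_color card_adjacent_edges_le4[OF cub e1] card_adjacent_edges_le4[OF cub e2]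
    unfolding N1_def N2_def by meson
  have e12: "e1 \<noteq> e2" using disj e1(2) by auto
  define c' where "c' f = (if f = e1 then d1 else if f = e2 then d2 else c f)" for f
  have port: "c' f \<noteq> c' f'"
    if "f = e1 \<or> f = e2" "f' \<in> edges G" "f \<noteq> f'" "ends G f \<inter> ends G f' \<noteq> {}" for f f'
    using that N[of f'] N'[of f'] d1 d2 disj e12 unfolding c'_def by (auto simp: Int_commute)
  have "proper_edge_coloring G 5 c'"
    unfolding proper_edge_coloring_def
  proof (intro conjI ballI impI)
    fix f assume "f \<in> edges G"
    then show "c' f \<in> {1..5}" using d1 d2 range unfolding c'_def by auto
  next
    fix f f' assume f: "f \<in> edges G" "f' \<in> edges G" "f \<noteq> f' \<and> ends G f \<inter> ends G f' \<noteq> {}"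
    show "c' f \<noteq> c' f'"
    proof (cases "f \<in> {e1,e2} \<or> f' \<in> {e1,e2}")
      case True
      then show ?thesis using port[of f f'] port[of f' f] f by (auto simp: Int_commute)
    next
      case False
      then show ?thesis using proper[of f f'] f unfolding c'_def by auto
    qed
  qed
  moreover have "c' f = c f" if "f \<noteq> e1" "f \<noteq> e2" for f using that unfolding c'_def by simp
  ultimately show ?thesis by (rule that)
qed

definition ring_next :: "nat \<Rightarrow> nat \<Rightarrow> nat" where "ring_next k i = (if Suc i = k then 0 else Suc i)"
definition ring_prev :: "nat \<Rightarrow> nat \<Rightarrow> nat" where "ring_prev k i = (if i = 0 then k - 1 else i - 1)"

lemma ring_next_lt: "i < k \<Longrightarrow> ring_next k i < k" unfolding ring_next_def by auto
lemma ring_prev_lt: "i < k \<Longrightarrow> ring_prev k i < k" unfolding ring_prev_def by auto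
lemma ring_next_eq_iff: "i < k \<Longrightarrow> j < k \<Longrightarrow> ring_next k j = i \<longleftrightarrow> j = ring_prev k i"
  unfolding ring_next_def ring_prev_def by auto
lemma ring_next_neq: "2 \<le> k \<Longrightarrow> i < k \<Longrightarrow> ring_next k i \<noteq> i" unfolding ring_next_def by auto
lemma ring_prev_neq: "2 \<le> k \<Longrightarrow> i < k \<Longrightarrow> ring_prev k i \<noteq> i" unfolding ring_prev_def by auto

lemma exists_switch:
  assumes "a < m" "b < m" "a \<in> A" "b \<notin> A"
  shows "\<exists>t. Suc t < m \<and> (t \<in> A \<longleftrightarrow> Suc t \<notin> A)"
proof (rule ccontr)
  assume "\<not> ?thesis"
  then have st: "\<And>t. Suc t < m \<Longrightarrow> (t \<in> A \<longleftrightarrow> Suc t \<in> A)" by blast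
  have "t < m \<Longrightarrow> (t \<in> A \<longleftrightarrow> 0 \<in> A)" for t
    by (induction t) (use st in auto)
  then show False using assms by blast
qed

lemma ring_next_mod: "x < k \<Longrightarrow> ring_next k x = Suc x mod k"
  unfolding ring_next_def by auto

lemma ring_next_closed:
  assumes k: "0 < k" and T: "T \<subseteq> {..<k}" and a: "a \<in> T" and cl: "\<And>i. i \<in> T \<Longrightarrow> ring_next k i \<in> T"
  shows "T = {..<k}"
proof -
  have ak: "a < k" using a T by auto
  have "(a + n) mod k \<in> T" for n
  proof (induction n)
    case 0 then show ?case using a ak by simp
  next
    case (Suc n)
    have "ring_next k ((a + n) mod k) = Suc ((a + n) mod k) mod k" using ring_next_mod k by simp
    also have "\<dots> = (a + Suc n) mod k" by (simp add: mod_Suc_eq)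
    finally show ?case using cl[OF Suc] by simp
  qed
  moreover have "j = (a + (j + k - a)) mod k" if "j < k" for j
  proof -
    have "a + (j + k - a) = j + k" using ak by simp
    then show ?thesis using that by simp
  qed
  ultimately show ?thesis using T by (metis subsetI subset_antisym lessThan_iff)
qed

lemma exists_ring_switch:
  assumes k: "0 < k" and T: "T \<subseteq> {..<k}" and ne: "T \<noteq> {}" and nf: "T \<noteq> {..<k}"
  shows "\<exists>i\<in>T. ring_next k i \<notin> T"
  using ring_next_closed[OF k T] ne nf by blast

definition ring_walk :: "nat \<Rightarrow> nat \<Rightarrow> nat \<Rightarrow> nat" where "ring_walk k i0 t = (i0 + 1 + t) mod k"

lemma ring_walk_lt: "0 < k \<Longrightarrow> ring_walk k i0 t < k" unfolding ring_walk_def by simp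

lemma ring_walk_neq: assumes "i0 < k" "t < k - 1" shows "ring_walk k i0 t \<noteq> i0"
proof -
  have "(i0 + 1 + t) mod k \<noteq> i0"
  proof (cases "i0 + 1 + t < k")
    case True then show ?thesis by simp
  next
    case False
    then have "(i0 + 1 + t) mod k = i0 + 1 + t - k" using assms by (simp add: le_mod_geq)
    moreover have "i0 + 1 + t - k \<noteq> i0" using assms False by linarith
    ultimately show ?thesis by simp
  qed
  then show ?thesis unfolding ring_walk_def .
qed

lemma ring_next_ring_walk: "0 < k \<Longrightarrow> ring_next k (ring_walk k i0 t) = ring_walk k i0 (Suc t)"
  unfolding ring_walk_def using ring_next_mod[of "(i0 + 1 + t) mod k" k] by (simp add: mod_Suc_eq)

lemma ring_walk_surj: assumes "i0 < k" "j < k" "j \<noteq> i0" shows "\<exists>t < k - 1. ring_walk k i0 t = j"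
proof (cases "i0 < j")
  case True
  then show ?thesis using assms unfolding ring_walk_def by (intro exI[of _ "j - i0 - 1"]) auto
next
  case False
  then have "i0 + 1 + (j + k - i0 - 1) = j + k" using assms by simp
  then show ?thesis using assms False unfolding ring_walk_def by (intro exI[of _ "j + k - i0 - 1"]) auto
qed

lemma exists_ring_switch_avoiding:
  assumes i0: "i0 < k" and js: "j1 < k" "j2 < k" "j1 \<noteq> i0" "j2 \<noteq> i0" "j1 \<in> A" "j2 \<notin> A"
  shows "\<exists>j<k. j \<noteq> i0 \<and> ring_next k j \<noteq> i0 \<and> (j \<in> A \<longleftrightarrow> ring_next k j \<notin> A)"
proof -
  have k0: "0 < k" using i0 by simp
  obtain t1 where t1: "t1 < k - 1" "ring_walk k i0 t1 = j1" using ring_walk_surj[OF i0 js(1,3)] by blast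
  obtain t2 where t2: "t2 < k - 1" "ring_walk k i0 t2 = j2" using ring_walk_surj[OF i0 js(2,4)] by blast
  define B where "B = {t. ring_walk k i0 t \<in> A}"
  have "t1 \<in> B" "t2 \<notin> B" using t1 t2 js unfolding B_def by auto
  then obtain t where t: "Suc t < k - 1" "t \<in> B \<longleftrightarrow> Suc t \<notin> B"
    using exists_switch[OF t1(1) t2(1)] by blast
  define j where "j = ring_walk k i0 t"
  have nxt: "ring_next k j = ring_walk k i0 (Suc t)" unfolding j_def by (rule ring_next_ring_walk[OF k0])
  have "j < k" "j \<noteq> i0" "ring_next k j \<noteq> i0"
    unfolding nxt unfolding j_def using ring_walk_lt[OF k0] ring_walk_neq[OF i0] t(1) by simp_all
  moreover have "j \<in> A \<longleftrightarrow> ring_next k j \<notin> A" using t(2) unfolding nxt unfolding B_def j_def by simp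
  ultimately show ?thesis by blast
qed

section \<open>The necklace\<close>

definition copy_at :: "nat \<Rightarrow> nat \<Rightarrow> nat" where "copy_at v i = prod_encode (v, i)"

lemma copy_at_eq_iff[simp]: "copy_at v i = copy_at w j \<longleftrightarrow> v = w \<and> i = j"
  unfolding copy_at_def using prod_encode_eq by auto

text \<open>The necklace of \<open>k\<close> copies of \<open>G\<close>: copy \<open>i\<close> of a vertex or edge \<open>x\<close> is \<open>copy_at x i\<close>, and
  the edges \<open>e1 = x1 y1\<close>, \<open>e2 = x2 y2\<close> of copy \<open>i\<close> are redirected to join \<open>y1\<close>, \<open>y2\<close> of copy \<open>i\<close>
  with \<open>x1\<close>, \<open>x2\<close> of copy \<open>i + 1 mod k\<close>.\<close>

definition necklace_graph :: "mgraph \<Rightarrow> nat \<Rightarrow> nat \<Rightarrow> nat \<Rightarrow> nat \<Rightarrow> nat \<Rightarrow> nat \<Rightarrow> nat \<Rightarrow> mgraph" where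
  "necklace_graph G k x1 y1 x2 y2 e1 e2 =
    ((\<lambda>(v,i). copy_at v i) ` (verts G \<times> {..<k}),
     (\<lambda>(f,i). copy_at f i) ` (edges G \<times> {..<k}),
     (\<lambda>n. case prod_decode n of (f,i) \<Rightarrow>
        if f = e1 then {copy_at y1 i, copy_at x1 (ring_next k i)}
        else if f = e2 then {copy_at y2 i, copy_at x2 (ring_next k i)}
        else (\<lambda>v. copy_at v i) ` ends G f))"

locale necklace =
  fixes G :: mgraph and k :: nat and x1 y1 x2 y2 e1 e2 :: nat
  assumes cub: "cubic G" and ct: "trivial_small_cuts G" and k2: "2 \<le> k"
    and e1E: "e1 \<in> edges G" and e1e: "ends G e1 = {x1,y1}"
    and e2E: "e2 \<in> edges G" and e2e: "ends G e2 = {x2,y2}"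
    and dst: "x1 \<noteq> y1" "x1 \<noteq> x2" "x1 \<noteq> y2" "y1 \<noteq> x2" "y1 \<noteq> y2" "x2 \<noteq> y2"
begin

abbreviation "H \<equiv> necklace_graph G k x1 y1 x2 y2 e1 e2"

lemma G: "multigraph G" using cub unfolding cubic_def by auto
lemma deg: "v \<in> verts G \<Longrightarrow> card (incident G v) = 3" using cub unfolding cubic_def by auto
lemma fV: "finite (verts G)" and fE: "finite (edges G)" using G unfolding multigraph_def by auto
lemma e12: "e1 \<noteq> e2" using e1e e2e dst by (auto simp: doubleton_eq_iff)
lemma ports: "x1 \<in> verts G" "y1 \<in> verts G" "x2 \<in> verts G" "y2 \<in> verts G"
  using G e1E e1e e2E e2e unfolding multigraph_def by auto

lemma H_verts: "verts H = (\<lambda>(v,i). copy_at v i) ` (verts G \<times> {..<k})"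
  unfolding necklace_graph_def verts_def by simp
lemma H_edges: "edges H = (\<lambda>(f,i). copy_at f i) ` (edges G \<times> {..<k})"
  unfolding necklace_graph_def edges_def by simp
lemma H_verts_iff: "copy_at v i \<in> verts H \<longleftrightarrow> v \<in> verts G \<and> i < k"
  unfolding H_verts by auto
lemma H_edges_iff: "copy_at f i \<in> edges H \<longleftrightarrow> f \<in> edges G \<and> i < k"
  unfolding H_edges by auto
lemma H_ends: "ends H (copy_at f i) = (if f = e1 then {copy_at y1 i, copy_at x1 (ring_next k i)}
        else if f = e2 then {copy_at y2 i, copy_at x2 (ring_next k i)}
        else (\<lambda>v. copy_at v i) ` ends G f)"
  unfolding necklace_graph_def ends_def copy_at_def by simp
lemma H_ends_copy: "f \<noteq> e1 \<Longrightarrow> f \<noteq> e2 \<Longrightarrow> ends H (copy_at f i) = (\<lambda>v. copy_at v i) ` ends G f"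
  using H_ends by simp

lemma H_ends_wf:
  assumes n: "n \<in> edges H" shows "ends H n \<subseteq> verts H \<and> card (ends H n) = 2"
proof -
  obtain f i where fi: "n = copy_at f i" "f \<in> edges G" "i < k" using n unfolding H_edges by auto
  obtain a b where "ends G f = {a,b}" "a \<noteq> b" "a \<in> verts G" "b \<in> verts G"
    using edge_endsE[OF G fi(2)] by metis
  then show ?thesis using fi ports dst ring_next_lt[OF fi(3)] by (auto simp: H_ends H_verts_iff)
qed

lemma H_multigraph: "multigraph H"
  unfolding multigraph_def using H_ends_wf fV fE unfolding H_verts H_edges by simp

text \<open>The copy of an edge \<open>f\<close> at copy \<open>i\<close> of its end \<open>u\<close>: the edges at \<open>x1\<close> and \<open>x2\<close> coming from
  \<open>e1\<close> and \<open>e2\<close> belong to the previous copy.\<close>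

definition copy_index :: "nat \<Rightarrow> nat \<Rightarrow> nat \<Rightarrow> nat" where
  "copy_index u f i = (if (f = e1 \<and> u = x1) \<or> (f = e2 \<and> u = x2) then ring_prev k i else i)"

lemma H_ends_e1: "ends H (copy_at e1 j) = {copy_at y1 j, copy_at x1 (ring_next k j)}" by (simp add: H_ends)
lemma H_ends_e2: "ends H (copy_at e2 j) = {copy_at y2 j, copy_at x2 (ring_next k j)}" using e12 by (simp add: H_ends)

lemma copy_in_H_ends_iff:
  assumes i: "i < k" and j: "j < k"
  shows "copy_at u i \<in> ends H (copy_at f j) \<longleftrightarrow> u \<in> ends G f \<and> j = copy_index u f i"
proof -
  have "i = ring_next k j \<longleftrightarrow> j = ring_prev k i" using ring_next_eq_iff[OF i j] by auto
  then show ?thesis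
    using e1e e2e dst e12 unfolding copy_index_def
    by (cases "f = e1"; cases "f = e2") (auto simp: H_ends)
qed

lemma H_incident:
  assumes u: "u \<in> verts G" and i: "i < k"
  shows "incident H (copy_at u i) = (\<lambda>f. copy_at f (copy_index u f i)) ` incident G u"
proof -
  have "copy_index u f i < k" for f unfolding copy_index_def using i ring_prev_lt by auto
  then show ?thesis
    using copy_in_H_ends_iff[OF i] unfolding incident_def H_edges by fastforce
qed

lemma H_cubic: "cubic H"
  unfolding cubic_def
proof (intro conjI ballI)
  show "multigraph H" by (rule H_multigraph)
  fix n assume "n \<in> verts H"
  then obtain u i where ui: "n = copy_at u i" "u \<in> verts G" "i < k" unfolding H_verts by auto
  have "inj_on (\<lambda>f. copy_at f (copy_index u f i)) (incident G u)" by (auto intro!: inj_onI)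
  then have "card (incident H n) = card (incident G u)" using ui H_incident[OF ui(2,3)] by (simp add: card_image)
  then show "card (incident H n) = 3" using deg[OF ui(2)] by simp
qed

lemma H_card_verts: "card (verts H) = card (verts G) * k"
proof -
  have "inj_on (\<lambda>(v,i). copy_at v i) (verts G \<times> {..<k})" by (auto intro!: inj_onI)
  then show ?thesis unfolding H_verts by (simp add: card_image card_cartesian_product)
qed

section \<open>Small cuts of the necklace\<close>

text \<open>A layer that is neither
  empty nor full contributes at least two cut edges of its own, and each change between an empty
  and a full layer contributes the copies of \<open>e1\<close> and \<open>e2\<close> joining them; so a cut of at most three
  edges forces all layers but at most one to be alike, and then the ports bound the remaining one.\<close>

definition layer :: "nat set \<Rightarrow> nat \<Rightarrow> nat set" where
  "layer S i = {v \<in> verts G. copy_at v i \<in> S}"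

abbreviation mixed_layer :: "nat set \<Rightarrow> nat \<Rightarrow> bool" where
  "mixed_layer S i \<equiv> layer S i \<noteq> {} \<and> layer S i \<noteq> verts G"

lemma layer_subset: "layer S i \<subseteq> verts G" unfolding layer_def by auto

lemma layer_compl: "j < k \<Longrightarrow> layer (verts H - S) j = verts G - layer S j"
  unfolding layer_def using H_verts_iff by auto

lemma empty_if_layers_empty:
  assumes S: "S \<subseteq> verts H" and empty: "\<And>j. j < k \<Longrightarrow> layer S j = {}" shows "S = {}"
proof -
  have False if n: "n \<in> S" for n
  proof -
    obtain v j where "n = copy_at v j" "v \<in> verts G" "j < k" using n S unfolding H_verts by auto
    then show False using empty[of j] n unfolding layer_def by auto
  qed
  then show ?thesis by blast
qed

lemma copy_in_cut_H:
  assumes i: "i < k" and f: "f \<in> cut_edges G (layer S i)" and f12: "f \<noteq> e1" "f \<noteq> e2"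
  shows "copy_at f i \<in> cut_edges H S"
proof -
  have fE: "f \<in> edges G" using f unfolding cut_edges_def by auto
  then have "ends G f \<subseteq> verts G" using G unfolding multigraph_def by auto
  then have mem: "copy_at v i \<in> S \<longleftrightarrow> v \<in> layer S i" if "v \<in> ends G f" for v
    using that unfolding layer_def by auto
  have "ends H (copy_at f i) \<inter> S \<noteq> {}" "\<not> ends H (copy_at f i) \<subseteq> S"
    using f mem unfolding H_ends_copy[OF f12] cut_edges_def by blast+
  moreover have "copy_at f i \<in> edges H" using fE i H_edges_iff by simp
  ultimately show ?thesis unfolding cut_edges_def by blast
qed

lemma e1_copy_in_cut_H_iff:
  "j < k \<Longrightarrow> copy_at e1 j \<in> cut_edges H S \<longleftrightarrow> (y1 \<in> layer S j) \<noteq> (x1 \<in> layer S (ring_next k j))"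
  using e1E dst ports ring_next_lt[of j k] unfolding cut_edges_def layer_def
  by (auto simp: H_ends_e1 H_edges_iff)

lemma e2_copy_in_cut_H_iff:
  "j < k \<Longrightarrow> copy_at e2 j \<in> cut_edges H S \<longleftrightarrow> (y2 \<in> layer S j) \<noteq> (x2 \<in> layer S (ring_next k j))"
  using e2E dst ports ring_next_lt[of j k] unfolding cut_edges_def layer_def
  by (auto simp: H_ends_e2 H_edges_iff)

lemma finite_cut_H: "finite (cut_edges H S)"
  using H_multigraph unfolding multigraph_def cut_edges_def by auto

definition layer_cut :: "nat set \<Rightarrow> nat \<Rightarrow> nat set" where
  "layer_cut S i = (\<lambda>f. copy_at f i) ` (cut_edges G (layer S i) - {e1,e2})"

lemma layer_cut_subset: "i < k \<Longrightarrow> layer_cut S i \<subseteq> cut_edges H S"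
  unfolding layer_cut_def using copy_in_cut_H by auto

lemma card_layer_cut: "card (layer_cut S i) = card (cut_edges G (layer S i) - {e1,e2})"
  unfolding layer_cut_def by (rule card_image) (auto intro!: inj_onI)

lemma card_incident_minus_ports:
  assumes v: "v \<in> verts G" shows "2 \<le> card (incident G v - {e1,e2})"
proof -
  have "card (incident G v \<inter> {e1,e2}) \<le> 1"
    using e1e e2e dst unfolding incident_def by (auto simp: card_le_Suc0_iff_eq)
  then show ?thesis using card_le_diff_plus_int[of "incident G v" "{e1,e2}"] deg[OF v] by simp
qed

text \<open>A vertex star of \<open>G\<close> keeps at least two of its three edges, since no vertex is an end of both
  \<open>e1\<close> and \<open>e2\<close>; every other nontrivial cut of \<open>G\<close> has at least four edges.\<close>

lemma card_layer_cut_ge2: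
  assumes "mixed_layer S i" shows "2 \<le> card (layer_cut S i)"
proof (cases "4 \<le> card (cut_edges G (layer S i))")
  case True
  have "card (cut_edges G (layer S i) \<inter> {e1,e2}) \<le> card {e1,e2}" by (rule card_mono) auto
  then have "card (cut_edges G (layer S i) \<inter> {e1,e2}) \<le> 2" using e12 by simp
  then show ?thesis
    using True card_le_diff_plus_int[of "cut_edges G (layer S i)" "{e1,e2}"] unfolding card_layer_cut by simp
next
  case False
  then have "card (cut_edges G (layer S i)) \<le> 3" by simp
  then obtain v where "v \<in> verts G" "cut_edges G (layer S i) = incident G v"
    using small_cut_vertex_star[OF G ct layer_subset] assms by blast
  then show ?thesis using card_incident_minus_ports unfolding card_layer_cut by simp
qed

lemma mixed_layer_unique:
  assumes c3: "card (cut_edges H S) \<le> 3" and ij: "i < k" "j < k"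
    and "mixed_layer S i" "mixed_layer S j"
  shows "i = j"
proof (rule ccontr)
  assume "i \<noteq> j"
  then have "layer_cut S i \<inter> layer_cut S j = {}" unfolding layer_cut_def by auto
  then have "card (layer_cut S i) + card (layer_cut S j) \<le> card (cut_edges H S)"
    using card_disjoint_subsets_le[OF finite_cut_H layer_cut_subset layer_cut_subset] ij by blast
  then show False using card_layer_cut_ge2[OF assms(4)] card_layer_cut_ge2[OF assms(5)] c3 by simp
qed

lemma card_cut_ports_le:
  "card (cut_edges G R \<inter> {e1,e2}) \<le> card ({x1,y1,x2,y2} \<inter> R)"
proof (rule card_inj_on_le)
  define g where "g e = (if e = e1 then (if x1 \<in> R then x1 else y1) else (if x2 \<in> R then x2 else y2))" for e
  show "inj_on g (cut_edges G R \<inter> {e1,e2})" unfolding inj_on_def g_def using dst by auto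
  show "g ` (cut_edges G R \<inter> {e1,e2}) \<subseteq> {x1,y1,x2,y2} \<inter> R"
    using e1e e2e e12 unfolding g_def cut_edges_def by auto
qed simp

text \<open>If the mixed layer \<open>i0\<close> is the only nonempty one, then each port of \<open>G\<close> lying in it
  contributes a copy of \<open>e1\<close> or \<open>e2\<close> to the cut, on top of the layer's own cut edges.\<close>

lemma card_layer_cut_plus_ports:
  assumes i0: "i0 < k"
    and empty: "layer S (ring_prev k i0) = {}" "layer S (ring_next k i0) = {}"
  shows "card (layer_cut S i0) + card ({x1,y1,x2,y2} \<inter> layer S i0) \<le> card (cut_edges H S)"
proof -
  define port_copy where "port_copy p = (if p = x1 then copy_at e1 (ring_prev k i0)
     else if p = y1 then copy_at e1 i0 else if p = x2 then copy_at e2 (ring_prev k i0) else copy_at e2 i0)"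
    for p
  let ?P = "{x1,y1,x2,y2} \<inter> layer S i0"
  have pk: "ring_prev k i0 < k" "ring_prev k i0 \<noteq> i0" "ring_next k (ring_prev k i0) = i0"
    using ring_prev_lt[OF i0] ring_prev_neq[OF k2 i0] ring_next_eq_iff[OF i0 ring_prev_lt[OF i0]] by auto
  have "port_copy p \<in> cut_edges H S" if "p \<in> ?P" for p
    using that e1_copy_in_cut_H_iff[OF pk(1)] e1_copy_in_cut_H_iff[OF i0]
      e2_copy_in_cut_H_iff[OF pk(1)] e2_copy_in_cut_H_iff[OF i0] pk(3) empty dst
    unfolding port_copy_def by auto
  then have sub: "port_copy ` ?P \<subseteq> cut_edges H S" by blast
  have "inj_on port_copy ?P" unfolding inj_on_def port_copy_def using dst e12 pk(2) by auto
  then have card: "card (port_copy ` ?P) = card ?P" by (rule card_image)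
  have "layer_cut S i0 \<inter> port_copy ` ?P = {}"
    unfolding layer_cut_def port_copy_def by auto
  then show ?thesis
    using card_disjoint_subsets_le[OF finite_cut_H layer_cut_subset[OF i0] sub] card by simp
qed

lemma single_mixed_layer_small:
  assumes S: "S \<subseteq> verts H" and c3: "card (cut_edges H S) \<le> 3" and i0: "i0 < k"
    and mi: "mixed_layer S i0" and others: "\<And>j. j < k \<Longrightarrow> j \<noteq> i0 \<Longrightarrow> layer S j = {}"
  shows "card S \<le> 1"
proof -
  define R where "R = layer S i0"
  define P where "P = {x1,y1,x2,y2}"
  have RV: "R \<subseteq> verts G" unfolding R_def by (rule layer_subset)
  have "S = (\<lambda>v. copy_at v i0) ` R"
    using S others i0 unfolding R_def H_verts layer_def by fastforce
  then have cardS: "card S \<le> card R" by (simp add: card_image_le finite_subset[OF RV fV])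
  have "layer S (ring_prev k i0) = {}" "layer S (ring_next k i0) = {}"
    using others ring_prev_lt[OF i0] ring_prev_neq[OF k2 i0] ring_next_lt[OF i0] ring_next_neq[OF k2 i0] by auto
  then have tot: "card (cut_edges G R - {e1,e2}) + card (P \<inter> R) \<le> 3"
    using card_layer_cut_plus_ports[OF i0] c3 unfolding card_layer_cut R_def P_def by fastforce
  then have "card (cut_edges G R) \<le> 3"
    using card_le_diff_plus_int[of "cut_edges G R" "{e1,e2}"] card_cut_ports_le[of R] unfolding P_def by simp
  then have "card R \<le> 1 \<or> card (verts G - R) \<le> 1" using ct RV unfolding trivial_small_cuts_def by blast
  moreover have "\<not> card (verts G - R) \<le> 1"
  proof
    assume "card (verts G - R) \<le> 1"
    moreover have "verts G - R \<noteq> {}" using mi RV unfolding R_def by auto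
    ultimately obtain v where v: "verts G - R = {v}" using card_le_1_singletonE fV by blast
    have "card P = 4" unfolding P_def using dst by simp
    moreover have "P - {v} \<subseteq> P \<inter> R" using v ports unfolding P_def by auto
    then have "card (P - {v}) \<le> card (P \<inter> R)" by (intro card_mono) (auto simp: P_def)
    moreover have "2 \<le> card (cut_edges G R - {e1,e2})"
      using card_layer_cut_ge2[OF mi] unfolding card_layer_cut R_def .
    ultimately show False using tot card_Diff_singleton_if[of P v] unfolding P_def by (auto split: if_splits)
  qed
  ultimately show ?thesis using cardS by simp
qed

lemma switch_copies_in_cut_H:
  assumes j: "j < k" and uniform: "layer S j \<in> {{}, verts G}" "layer S (ring_next k j) \<in> {{}, verts G}"
    and switch: "layer S j \<noteq> layer S (ring_next k j)"
  shows "copy_at e1 j \<in> cut_edges H S" "copy_at e2 j \<in> cut_edges H S"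
  using e1_copy_in_cut_H_iff[OF j] e2_copy_in_cut_H_iff[OF j] assms ports by auto

lemma mixed_layer_others_uniform:
  assumes c3: "card (cut_edges H S) \<le> 3" and i0: "i0 < k" and mi: "mixed_layer S i0"
  shows "(\<forall>j<k. j \<noteq> i0 \<longrightarrow> layer S j = {}) \<or> (\<forall>j<k. j \<noteq> i0 \<longrightarrow> layer S j = verts G)"
proof (rule ccontr)
  have uniform: "layer S j \<in> {{}, verts G}" if "j < k" "j \<noteq> i0" for j
    using mixed_layer_unique[OF c3 that(1) i0 _ mi] that(2) by blast
  assume "\<not> ?thesis"
  then obtain j1 j2 where js: "j1 < k" "j2 < k" "j1 \<noteq> i0" "j2 \<noteq> i0"
    and ne: "layer S j1 \<noteq> {}" "layer S j2 \<noteq> verts G"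
    by blast
  define A where "A = {j. layer S j = verts G}"
  have "j1 \<in> A" "j2 \<notin> A" using uniform[OF js(1,3)] ne unfolding A_def by auto
  then obtain j where j: "j < k" "j \<noteq> i0" "ring_next k j \<noteq> i0" and sw: "j \<in> A \<longleftrightarrow> ring_next k j \<notin> A"
    using exists_ring_switch_avoiding[OF i0 js] by blast
  have "layer S j \<noteq> layer S (ring_next k j)" using sw unfolding A_def by auto
  then have sub: "{copy_at e1 j, copy_at e2 j} \<subseteq> cut_edges H S"
    using switch_copies_in_cut_H[OF j(1) uniform[OF j(1,2)] uniform[OF ring_next_lt[OF j(1)] j(3)]] by simp
  have "layer_cut S i0 \<inter> {copy_at e1 j, copy_at e2 j} = {}" unfolding layer_cut_def by auto
  then have "card (layer_cut S i0) + card {copy_at e1 j, copy_at e2 j} \<le> card (cut_edges H S)"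
    using card_disjoint_subsets_le[OF finite_cut_H layer_cut_subset[OF i0] sub] by blast
  moreover have "card {copy_at e1 j, copy_at e2 j} = 2" using e12 by simp
  ultimately show False using card_layer_cut_ge2[OF mi] c3 by simp
qed

lemma unmixed_layers_uniform:
  assumes c3: "card (cut_edges H S) \<le> 3" and uniform: "\<And>j. j < k \<Longrightarrow> layer S j \<in> {{}, verts G}"
  shows "(\<forall>j<k. layer S j = {}) \<or> (\<forall>j<k. layer S j = verts G)"
proof (rule ccontr)
  define T where "T = {j. j < k \<and> layer S j = verts G}"
  have k0: "0 < k" using k2 by simp
  assume "\<not> ?thesis"
  then obtain j1 j2 where "j1 < k" "layer S j1 \<noteq> {}" "j2 < k" "layer S j2 \<noteq> verts G" by blast
  then have "j1 \<in> T" "j2 \<in> {..<k} - T" using uniform unfolding T_def by auto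
  then have T: "T \<subseteq> {..<k}" "T \<noteq> {}" "T \<noteq> {..<k}" "{..<k} - T \<noteq> {}" "{..<k} - T \<noteq> {..<k}"
    unfolding T_def by auto
  obtain i where i: "i \<in> T" "ring_next k i \<notin> T" using exists_ring_switch[OF k0 T(1-3)] by blast
  obtain i' where i': "i' \<in> {..<k} - T" "ring_next k i' \<notin> {..<k} - T"
    using exists_ring_switch[OF k0 _ T(4-5)] by blast
  have ik: "i < k" "i' < k" "ring_next k i < k" "ring_next k i' < k"
    using i(1) i'(1) T(1) ring_next_lt by auto
  have "layer S i \<noteq> layer S (ring_next k i)" "layer S i' \<noteq> layer S (ring_next k i')"
    using i i' ik uniform unfolding T_def by auto
  then have "copy_at e1 i \<in> cut_edges H S" "copy_at e2 i \<in> cut_edges H S"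
    "copy_at e1 i' \<in> cut_edges H S" "copy_at e2 i' \<in> cut_edges H S"
    using switch_copies_in_cut_H[OF ik(1) uniform[OF ik(1)] uniform[OF ik(3)]]
      switch_copies_in_cut_H[OF ik(2) uniform[OF ik(2)] uniform[OF ik(4)]] by blast+
  then have "card {copy_at e1 i, copy_at e2 i, copy_at e1 i', copy_at e2 i'} \<le> card (cut_edges H S)"
    by (intro card_mono[OF finite_cut_H]) blast
  moreover have "i \<noteq> i'" using i i' by auto
  then have "card {copy_at e1 i, copy_at e2 i, copy_at e1 i', copy_at e2 i'} = 4" using e12 by simp
  ultimately show False using c3 by simp
qed

lemma H_trivial_small_cuts: "trivial_small_cuts H"
  unfolding trivial_small_cuts_def
proof (intro allI impI)
  fix S assume S: "S \<subseteq> verts H" and c3: "card (cut_edges H S) \<le> 3"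
  let ?S' = "verts H - S"
  have S': "?S' \<subseteq> verts H" and c3': "card (cut_edges H ?S') \<le> 3"
    using c3 cut_edges_compl[OF H_multigraph S] by auto
  have compl_empty: "layer ?S' j = {} \<longleftrightarrow> layer S j = verts G" if "j < k" for j
    using layer_compl[OF that] layer_subset[of S j] by blast
  show "card S \<le> 1 \<or> card ?S' \<le> 1"
  proof (cases "\<exists>i0<k. mixed_layer S i0")
    case True
    then obtain i0 where i0: "i0 < k" "mixed_layer S i0" by blast
    then have mi': "mixed_layer ?S' i0" using layer_compl[OF i0(1)] layer_subset[of S i0] by blast
    from mixed_layer_others_uniform[OF c3 i0] show ?thesis
    proof
      assume "\<forall>j<k. j \<noteq> i0 \<longrightarrow> layer S j = {}"
      then show ?thesis using single_mixed_layer_small[OF S c3 i0] by blast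
    next
      assume "\<forall>j<k. j \<noteq> i0 \<longrightarrow> layer S j = verts G"
      then show ?thesis using single_mixed_layer_small[OF S' c3' i0(1) mi'] compl_empty by blast
    qed
  next
    case False
    then have "layer S j \<in> {{}, verts G}" if "j < k" for j using that by blast
    from unmixed_layers_uniform[OF c3 this] show ?thesis
    proof
      assume "\<forall>j<k. layer S j = {}"
      then show ?thesis using empty_if_layers_empty[OF S] by simp
    next
      assume "\<forall>j<k. layer S j = verts G"
      then have "?S' = {}" using empty_if_layers_empty[OF S'] compl_empty by simp
      then have "card ?S' = 0" by (simp only: card.empty)
      then show ?thesis by simp
    qed
  qed
qed

lemma H_cyc4: "cyc4_edge_connected H"
  by (rule trivial_small_cuts_imp_cyc4[OF H_multigraph H_trivial_small_cuts])

section \<open>Colourings of the necklace\<close>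

lemma copy_coloring_proper_off_ports:
  assumes pc: "proper_edge_coloring H 5 c" and i: "i < k"
  shows "\<And>f. f \<in> edges G - {e1,e2} \<Longrightarrow> c (copy_at f i) \<in> {1..5}"
    and "\<And>f f'. f \<in> edges G - {e1,e2} \<Longrightarrow> f' \<in> edges G - {e1,e2} \<Longrightarrow> f \<noteq> f' \<Longrightarrow>
           ends G f \<inter> ends G f' \<noteq> {} \<Longrightarrow> c (copy_at f i) \<noteq> c (copy_at f' i)"
proof -
  fix f assume "f \<in> edges G - {e1,e2}"
  then show "c (copy_at f i) \<in> {1..5}" using pc i H_edges_iff unfolding proper_edge_coloring_def by auto
next
  fix f f' assume f: "f \<in> edges G - {e1,e2}" "f' \<in> edges G - {e1,e2}" "f \<noteq> f'"
    and meet: "ends G f \<inter> ends G f' \<noteq> {}"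
  have "ends H (copy_at f i) \<inter> ends H (copy_at f' i) \<noteq> {}"
    using meet f H_ends_copy[of f i] H_ends_copy[of f' i] by auto
  then show "c (copy_at f i) \<noteq> c (copy_at f' i)"
    using pc f i H_edges_iff unfolding proper_edge_coloring_def by auto
qed

definition port_edges :: "nat set" where
  "port_edges = incident G x1 \<union> incident G y1 \<union> incident G x2 \<union> incident G y2"

lemma colors_at_copy:
  assumes u: "u \<in> verts G" "u \<notin> {x1,y1,x2,y2}" and i: "i < k"
    and agree: "\<And>f. f \<in> incident G u \<Longrightarrow> c' f = c (copy_at f i)"
  shows "colors_at G c' u = colors_at H c (copy_at u i)"
proof -
  have "copy_index u f i = i" for f using u unfolding copy_index_def by auto
  then have "colors_at H c (copy_at u i) = c ` (\<lambda>f. copy_at f i) ` incident G u"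
    unfolding colors_at_def H_incident[OF u(1) i] by simp
  also have "\<dots> = c' ` incident G u" using agree by (auto simp: image_image)
  finally show ?thesis unfolding colors_at_def by simp
qed

lemma abnormal_copy_off_ports:
  assumes i: "i < k" and agree: "\<And>f. f \<noteq> e1 \<Longrightarrow> f \<noteq> e2 \<Longrightarrow> c' f = c (copy_at f i)"
    and f: "f \<in> abnormal_edges G c'" "f \<notin> port_edges"
  shows "copy_at f i \<in> abnormal_edges H c"
proof -
  have fE: "f \<in> edges G" using f unfolding abnormal_edges_def by auto
  obtain u w where uw: "ends G f = {u,w}" "u \<in> verts G" "w \<in> verts G"
    using edge_endsE[OF G fE] by metis
  have off: "u \<notin> {x1,y1,x2,y2}" "w \<notin> {x1,y1,x2,y2}"
    using f(2) fE uw unfolding port_edges_def incident_def by auto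
  have agree': "c' h = c (copy_at h i)" if "h \<in> incident G v" "v \<notin> {x1,y1,x2,y2}" for h v
    using that e1e e2e unfolding incident_def by (intro agree) auto
  have "colors_at G c' u = colors_at H c (copy_at u i)" "colors_at G c' w = colors_at H c (copy_at w i)"
    using colors_at_copy[OF uw(2) off(1) i] colors_at_copy[OF uw(3) off(2) i] agree' off by auto
  moreover have f12: "f \<noteq> e1" "f \<noteq> e2" using f(2) e1E e1e e2E e2e unfolding port_edges_def incident_def by auto
  then have "ends H (copy_at f i) = {copy_at u i, copy_at w i}" using H_ends_copy uw(1) by simp
  ultimately show ?thesis
    using f(1) fE i H_edges_iff poor_edge_iff[OF uw(1)] rich_edge_iff[OF uw(1)] poor_edge_iff rich_edge_iff
    unfolding abnormal_edges_def by simp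
qed

text \<open>The edge \<open>g = y1 x2\<close> is shared by the stars of \<open>y1\<close> and \<open>x2\<close>, just as \<open>e1\<close> and \<open>e2\<close> are shared
  within the port pairs, so the four stars have at most \<open>3 + 2 + 2 + 2\<close> edges.\<close>

lemma card_port_edges_le9:
  assumes g: "g \<in> edges G" "ends G g = {y1,x2}"
  shows "card port_edges \<le> 9"
proof -
  have fi: "finite (incident G v)" for v using finite_incident[OF G] .
  have inc: "e1 \<in> incident G y1" "g \<in> incident G x2" "e2 \<in> incident G y2"
    using e1E e1e e2E e2e g unfolding incident_def by auto
  let ?A = "incident G x1" and ?B = "incident G y1 - {e1}" and ?C = "incident G x2 - {g}"
    and ?D = "incident G y2 - {e2}"
  have "port_edges = ?A \<union> ?B \<union> ?C \<union> ?D"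
    using e1E e1e e2E e2e g unfolding port_edges_def incident_def by blast
  also have "card \<dots> \<le> card ?A + card ?B + card ?C + card ?D"
    using card_Un_le[of ?A ?B] card_Un_le[of "?A \<union> ?B" ?C] card_Un_le[of "?A \<union> ?B \<union> ?C" ?D]
    by linarith
  also have "\<dots> = 3 + 2 + 2 + 2" using deg ports inc fi by (simp add: card_Diff_singleton)
  finally show ?thesis by simp
qed

lemma copy_has_abnormal_edge:
  assumes pc: "proper_edge_coloring H 5 c" and i: "i < k"
    and g: "g \<in> edges G" "ends G g = {y1,x2}"
    and hyp: "\<And>c'. proper_edge_coloring G 5 c' \<Longrightarrow> 10 \<le> card (abnormal_edges G c')"
  shows "\<exists>f. copy_at f i \<in> abnormal_edges H c"
proof -
  have disj: "ends G e1 \<inter> ends G e2 = {}" using e1e e2e dst by auto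
  have "\<exists>c'. proper_edge_coloring G 5 c' \<and> (\<forall>f. f \<noteq> e1 \<longrightarrow> f \<noteq> e2 \<longrightarrow> c' f = c (copy_at f i))"
    by (rule proper_recolor_two_edges[OF cub e1E e1e e2E e2e disj, of "\<lambda>f. c (copy_at f i)"])
      (use copy_coloring_proper_off_ports[OF pc i] in auto)
  then obtain c' where c': "proper_edge_coloring G 5 c'" "\<And>f. f \<noteq> e1 \<Longrightarrow> f \<noteq> e2 \<Longrightarrow> c' f = c (copy_at f i)"
    by blast
  define A where "A = {f \<in> edges G. copy_at f i \<in> abnormal_edges H c}"
  have "abnormal_edges G c' \<subseteq> port_edges \<union> A"
    using abnormal_copy_off_ports[of i c' c, OF i c'(2)] unfolding A_def abnormal_edges_def by blast
  moreover have "finite (port_edges \<union> A)"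
    using fE finite_incident[OF G] unfolding port_edges_def A_def by simp
  ultimately have "card (abnormal_edges G c') \<le> card (port_edges \<union> A)" by (rule card_mono[rotated])
  then have "10 \<le> card (port_edges \<union> A)" using hyp[OF c'(1)] by simp
  also have "\<dots> \<le> 9 + card A" using card_Un_le[of port_edges A] card_port_edges_le9[OF g] by simp
  finally have "A \<noteq> {}" by auto
  then show ?thesis unfolding A_def by auto
qed

end

lemma sublinear_const: "sublinear (\<lambda>_. c)"
  unfolding sublinear_def using lim_const_over_n[of "real c"] by simp

lemma not_sublinear_if_linear_on_multiples:
  assumes n0: "1 \<le> n0" and big: "\<And>k. 2 \<le> k \<Longrightarrow> k \<le> f (n0 * k)"
  shows "\<not> sublinear f"
proof
  assume "sublinear f"
  then have "\<forall>\<^sub>F n in sequentially. real (f n) / real n < 1 / real n0"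
    using n0 unfolding sublinear_def by (intro order_tendstoD(2)) auto
  then obtain N where N: "\<And>n. n \<ge> N \<Longrightarrow> real (f n) / real n < 1 / real n0"
    unfolding eventually_sequentially by blast
  define k where "k = max 2 N"
  have k2: "2 \<le> k" and "N \<le> n0 * k"
    using n0 unfolding k_def by (auto intro: order_trans[OF _ mult_le_mono1[of 1 n0]])
  then have "real (f (n0 * k)) / real (n0 * k) < 1 / real n0" using N by blast
  moreover have "1 / real n0 = real k / real (n0 * k)" using n0 k2 by (simp add: field_simps)
  moreover have "real k / real (n0 * k) \<le> real (f (n0 * k)) / real (n0 * k)"
    using big[OF k2] by (intro divide_right_mono) auto
  ultimately show False by simp
qed

lemma necklace_many_abnormal_edges:
  assumes cub: "cubic G" and cy: "cyc4_edge_connected G" and V: "5 \<le> card (verts G)" and k: "2 \<le> k"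
    and hyp: "\<And>c. proper_edge_coloring G 5 c \<Longrightarrow> 10 \<le> card (abnormal_edges G c)"
  obtains H where "cubic H" "cyc4_edge_connected H" "card (verts H) = card (verts G) * k"
    "\<And>c. proper_edge_coloring H 5 c \<Longrightarrow> k \<le> card (abnormal_edges H c)"
proof -
  have ct: "trivial_small_cuts G" using cyc4_imp_trivial_small_cuts[OF cub cy] .
  obtain x1 y1 x2 y2 e1 e2 g where p: "e1 \<in> edges G" "ends G e1 = {x1,y1}"
    "e2 \<in> edges G" "ends G e2 = {x2,y2}" "g \<in> edges G" "ends G g = {y1,x2}"
    "x1 \<noteq> y1" "x1 \<noteq> x2" "x1 \<noteq> y2" "y1 \<noteq> x2" "y1 \<noteq> y2" "x2 \<noteq> y2"
    using obtain_three_edge_path[OF cub ct V] by metis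
  interpret N: necklace G k x1 y1 x2 y2 e1 e2
    by unfold_locales (use cub ct k p in auto)
  have "k \<le> card (abnormal_edges N.H c)" if c: "proper_edge_coloring N.H 5 c" for c
  proof -
    obtain F where F: "\<And>i. i < k \<Longrightarrow> copy_at (F i) i \<in> abnormal_edges N.H c"
      using N.copy_has_abnormal_edge[OF c _ p(5,6) hyp] by metis
    have "k = card ((\<lambda>i. copy_at (F i) i) ` {..<k})" by (subst card_image) (auto intro!: inj_onI)
    also have "\<dots> \<le> card (abnormal_edges N.H c)"
      using F N.H_multigraph unfolding multigraph_def abnormal_edges_def by (intro card_mono) auto
    finally show ?thesis .
  qed
  then show ?thesis using that N.H_cubic N.H_cyc4 N.H_card_verts by blast
qed

lemma abnormal_bound_9_if_sublinear_bound:
  assumes sub: "sublinear f"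
    and bound: "\<forall>G. cubic G \<and> cyc4_edge_connected G \<longrightarrow>
               (\<exists>c. proper_edge_coloring G 5 c \<and> card (abnormal_edges G c) \<le> f (card (verts G)))"
    and G: "cubic G" "cyc4_edge_connected G"
  shows "\<exists>c. proper_edge_coloring G 5 c \<and> card (abnormal_edges G c) \<le> 9"
proof (rule ccontr)
  assume "\<not> ?thesis"
  then have hyp: "\<And>c. proper_edge_coloring G 5 c \<Longrightarrow> 10 \<le> card (abnormal_edges G c)" by force
  obtain c0 where "proper_edge_coloring G 5 c0" using bound G by blast
  then have "10 \<le> card (edges G)"
    using hyp card_mono[of "edges G" "abnormal_edges G c0"] G(1)
    unfolding cubic_def multigraph_def abnormal_edges_def by fastforce
  then have V: "5 \<le> card (verts G)" using cubic_edge_count[OF G(1)] by linarith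
  have "k \<le> f (card (verts G) * k)" if k: "2 \<le> k" for k
  proof -
    obtain H where H: "cubic H" "cyc4_edge_connected H" "card (verts H) = card (verts G) * k"
      "\<And>c. proper_edge_coloring H 5 c \<Longrightarrow> k \<le> card (abnormal_edges H c)"
      using necklace_many_abnormal_edges[OF G V k hyp] by blast
    then show ?thesis using bound by fastforce
  qed
  then show False using not_sublinear_if_linear_on_multiples[of "card (verts G)"] V sub by simp
qed

theorem mainTheorem5:
  shows "(\<forall>G. cubic G \<and> cyc4_edge_connected G \<longrightarrow>
            (\<exists>c. proper_edge_coloring G 5 c \<and> card (abnormal_edges G c) \<le> 9))
     \<longleftrightarrow>
         (\<exists>f. sublinear f \<and>
            (\<forall>G. cubic G \<and> cyc4_edge_connected G \<longrightarrow>
               (\<exists>c. proper_edge_coloring G 5 c \<and> card (abnormal_edges G c) \<le> f (card (verts G)))))"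
  using sublinear_const[of 9] abnormal_bound_9_if_sublinear_bound by blast

end
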